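(* Fix $\lambda>0$. For real $d\ge1$ let $\tilde x(d)$ be the unique positive solution of $d\,x=1+\lambda/(1+x)^d$ and $\nu(d)=\frac{d\tilde x(d)-1}{1+\tilde x(d)}$. Then the function $H(x)=\log\big(e^x\nu(e^x)\big)$ is concave on $[0,\infty)$.
   Context: Equivalently $\nu(d)=\sup_{x\ge0}\frac{dx}{1+x}\cdot\frac{f(x)}{1+f(x)}$ with $f(x)=\lambda/(1+x)^d$. *)

theory Defs
  imports "HOL-Analysis.Analysis"
begin

definition xtilde :: "real \<Rightarrow> real \<Rightarrow> real" where
  "xtilde lam d = (THE x. x > 0 \<and> d * x = 1 + lam / (1 + x) powr d)"

definition nu :: "real \<Rightarrow> real \<Rightarrow> real" where
  "nu lam d = (d * xtilde lam d - 1) / (1 + xtilde lam d)"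

definition Hfun :: "real \<Rightarrow> real \<Rightarrow> real" where
  "Hfun lam x = ln (exp x * nu lam (exp x))"

end

theory Submission
  imports Defs
begin

text \<open>
  Substituting \<open>d = exp t\<close> and \<open>u = ln (ln (1 + x))\<close> turns the defining equation of
  \<open>xtilde \<lambda> d\<close> into the critical-point equation of \<open>Hlift \<lambda> t\<close>, whose maximum value is
  \<open>Hfun \<lambda> t\<close>. Since \<open>u \<mapsto> ln (exp (exp u) - 1) - exp u = ln (1 - exp (- exp u))\<close> is
  concave and \<open>s \<mapsto> ln (\<lambda> + exp (exp s))\<close> is convex, \<open>Hlift \<lambda>\<close> is jointly concave in
  \<open>(t, u)\<close>, and maximising a jointly concave function over one variable leaves a concave
  function of the other. So \<open>Hfun \<lambda>\<close> is in fact concave on the whole real line.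
\<close>

lemma convex_on_compose_affine:
  fixes g :: "'a::real_vector \<Rightarrow> 'b::real_vector"
  assumes "linear g" "convex_on UNIV f"
  shows "convex_on UNIV (\<lambda>x. f (g x + c))"
proof -
  have "g (u *\<^sub>R x + v *\<^sub>R y) + c = u *\<^sub>R (g x + c) + v *\<^sub>R (g y + c)"
    if "u + v = 1" for u v :: real and x y
    using that by (simp add: linear_add[OF assms(1)] linear_scale[OF assms(1)] algebra_simps
        flip: scaleR_add_left)
  with assms(2) show ?thesis by (simp add: convex_on_def)
qed

lemma concave_on_compose_affine:
  fixes g :: "'a::real_vector \<Rightarrow> 'b::real_vector"
  assumes "linear g" "concave_on UNIV f"
  shows "concave_on UNIV (\<lambda>x. f (g x + c))"
  using assms convex_on_compose_affine[of g "\<lambda>y. - f y"] by (simp add: concave_on_def)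

lemma concave_on_partial_max:
  fixes G :: "'a::real_vector \<Rightarrow> 'b::real_vector \<Rightarrow> real"
  assumes concave: "concave_on UNIV (\<lambda>(t, u). G t u)"
    and upper: "\<And>t u. G t u \<le> H t"
    and attained: "\<And>t. \<exists>u. G t u = H t"
  shows "concave_on UNIV H"
  unfolding concave_on_iff
proof (intro conjI ballI allI impI)
  fix t1 t2 :: 'a and a b :: real
  assume ab: "a \<ge> 0" "b \<ge> 0" "a + b = 1"
  obtain u1 u2 where u: "G t1 u1 = H t1" "G t2 u2 = H t2"
    using attained by metis
  have "a * H t1 + b * H t2 \<le> G (a *\<^sub>R t1 + b *\<^sub>R t2) (a *\<^sub>R u1 + b *\<^sub>R u2)"
    using concave ab unfolding concave_on_iff u[symmetric]
    by (auto dest!: bspec[of _ _ "(t1, u1)"] bspec[of _ _ "(t2, u2)"])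
  also have "\<dots> \<le> H (a *\<^sub>R t1 + b *\<^sub>R t2)"
    by (rule upper)
  finally show "a * H t1 + b * H t2 \<le> H (a *\<^sub>R t1 + b *\<^sub>R t2)" .
qed simp

lemma divide_exp_minus_one_antimono:
  fixes w1 w2 :: real
  assumes "0 < w1" "w1 \<le> w2"
  shows "w2 / (exp w2 - 1) \<le> w1 / (exp w1 - 1)"
proof -
  have w2: "w2 > 0" using assms by simp
  have "exp ((1 - w1/w2) *\<^sub>R 0 + (w1/w2) *\<^sub>R w2) \<le> (1 - w1/w2) * exp 0 + (w1/w2) * exp w2"
    by (rule convex_onD[OF exp_convex]) (use assms w2 in auto)
  then have "w2 * exp w1 \<le> w2 * ((1 - w1/w2) + (w1/w2) * exp w2)"
    using w2 by simp
  also have "\<dots> = w2 - w1 + w1 * exp w2"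
    using w2 by (simp add: field_simps)
  finally have "w2 * exp w1 \<le> w2 - w1 + w1 * exp w2" .
  moreover have "exp w1 - 1 > 0" "exp w2 - 1 > 0"
    using assms w2 by auto
  ultimately show ?thesis by (simp add: divide_simps algebra_simps)
qed

lemma DERIV_ln_exp_exp_minus_one:
  "((\<lambda>u. ln (exp (exp u) - 1) - exp u) has_real_derivative exp u / (exp (exp u) - 1)) (at u)"
proof -
  have pos: "exp (exp u) - 1 > 0" by simp
  then have "((\<lambda>u. ln (exp (exp u) - 1) - exp u) has_real_derivative
      exp (exp u) * exp u / (exp (exp u) - 1) - exp u) (at u)"
    by (auto intro!: derivative_eq_intros)
  also have "exp (exp u) * exp u / (exp (exp u) - 1) - exp u = exp u / (exp (exp u) - 1)"
    using pos by (simp add: field_simps)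
  finally show ?thesis .
qed

lemma concave_on_ln_exp_exp_minus_one:
  "concave_on UNIV (\<lambda>u. ln (exp (exp u) - 1) - exp u)"
  unfolding concave_on_def
  by (rule convex_on_realI[where f' = "\<lambda>u. - (exp u / (exp (exp u) - 1))"])
     (use DERIV_minus[OF DERIV_ln_exp_exp_minus_one] in
      \<open>auto intro!: divide_exp_minus_one_antimono\<close>)

lemma DERIV_ln_add_exp_exp:
  assumes "lam \<ge> 0"
  shows "((\<lambda>s. ln (lam + exp (exp s))) has_real_derivative
           exp s * (exp (exp s) / (lam + exp (exp s)))) (at s)"
proof -
  have "lam + exp (exp s) > 0" using assms by (simp add: add_nonneg_pos)
  then show ?thesis by (auto intro!: derivative_eq_intros simp: field_simps)
qed

lemma convex_on_ln_add_exp_exp: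
  assumes "lam \<ge> 0"
  shows "convex_on UNIV (\<lambda>s. ln (lam + exp (exp s)))"
proof (rule convex_on_realI[OF _ DERIV_ln_add_exp_exp[OF assms]])
  fix s t :: real
  assume "s \<le> t"
  then have "exp (exp s) \<le> exp (exp t)" "exp s \<le> exp t" by simp_all
  moreover from this assms
  have "exp (exp s) / (lam + exp (exp s)) \<le> exp (exp t) / (lam + exp (exp t))"
    by (simp add: divide_simps add_nonneg_pos) (simp add: algebra_simps mult_left_mono)
  ultimately show "exp s * (exp (exp s) / (lam + exp (exp s)))
                   \<le> exp t * (exp (exp t) / (lam + exp (exp t)))"
    using assms by (intro mult_mono) (auto simp: add_nonneg_pos)
qed simp

lemma xtilde_pos_eq:
  assumes lam: "lam \<ge> 0" and d: "d > 0"
  shows "xtilde lam d > 0 \<and> d * xtilde lam d = 1 + lam / (1 + xtilde lam d) powr d"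
proof -
  define p where "p x = d * x - 1 - lam / (1 + x) powr d" for x
  have p_strict_mono: "p y < p z" if "0 \<le> y" "y < z" for y z
  proof -
    have "(1 + y) powr d \<le> (1 + z) powr d"
      using that d by (intro powr_mono2) auto
    then have "lam / (1 + z) powr d \<le> lam / (1 + y) powr d"
      using lam that by (intro divide_left_mono) auto
    moreover have "d * y < d * z" using that d by simp
    ultimately show ?thesis by (simp add: p_def)
  qed
  define X where "X = (2 + lam) / d"
  have X: "X > 0" using lam d by (simp add: X_def)
  have p0: "p 0 < 0" using lam by (simp add: p_def)
  have "(1 + X) powr d \<ge> 1" using X d by (simp add: ge_one_powr_ge_zero)
  then have "lam / (1 + X) powr d \<le> lam"
    using lam mult_left_mono[of 1 "(1 + X) powr d" lam] by (simp add: divide_simps)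
  then have pX: "p X \<ge> 0" using d by (simp add: p_def X_def)
  have "continuous_on {0..X} p"
    unfolding p_def by (auto intro!: continuous_intros)
  then obtain x where x: "0 \<le> x" "p x = 0"
    using IVT'[of p 0 0 X] p0 pX X by auto
  with p0 have "x > 0" by (cases "x = 0") auto
  moreover have "d * x = 1 + lam / (1 + x) powr d"
    using x(2) by (simp add: p_def)
  moreover have "y = x" if "y > 0" "d * y = 1 + lam / (1 + y) powr d" for y
  proof -
    have "p y = 0" using that(2) by (simp add: p_def)
    with x that(1) show ?thesis
      using p_strict_mono[of x y] p_strict_mono[of y x] by fastforce
  qed
  ultimately have "\<exists>!x. x > 0 \<and> d * x = 1 + lam / (1 + x) powr d"
    by blast
  then show ?thesis
    unfolding xtilde_def by (rule theI')
qed

definition Hlift :: "real \<Rightarrow> real \<Rightarrow> real \<Rightarrow> real" where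
  "Hlift lam t u =
     2 * t + ln lam + (ln (exp (exp u) - 1) - exp u) - ln (lam + exp (exp (t + u)))"

lemma concave_on_Hlift:
  assumes "lam \<ge> 0"
  shows "concave_on UNIV (\<lambda>(t, u). Hlift lam t u)"
proof -
  have "concave_on UNIV (\<lambda>p::real \<times> real. 2 * fst p + ln lam)"
    using concave_on_compose_affine[of "\<lambda>p. 2 * fst p" "\<lambda>x. x" "ln lam"]
    by (simp add: linear_iff concave_on_ident)
  moreover have "concave_on UNIV (\<lambda>p::real \<times> real. ln (exp (exp (snd p)) - 1) - exp (snd p))"
    using concave_on_compose_affine[OF _ concave_on_ln_exp_exp_minus_one, of snd 0]
    by (simp add: linear_iff)
  moreover have "convex_on UNIV (\<lambda>p::real \<times> real. ln (lam + exp (exp (fst p + snd p))))"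
    using convex_on_compose_affine[OF _ convex_on_ln_add_exp_exp[OF assms],
        of "\<lambda>p. fst p + snd p" 0]
    by (simp add: linear_iff distrib_left)
  ultimately show ?thesis
    unfolding Hlift_def case_prod_beta' by (rule concave_on_diff[OF concave_on_add])
qed

lemma DERIV_Hlift:
  assumes "lam \<ge> 0"
  shows "(Hlift lam t has_real_derivative
           exp u / (exp (exp u) - 1)
           - exp (t + u) * (exp (exp (t + u)) / (lam + exp (exp (t + u))))) (at u)"
proof -
  have "((\<lambda>u. ln (lam + exp (exp (t + u)))) has_real_derivative
          exp (t + u) * (exp (exp (t + u)) / (lam + exp (exp (t + u)))) * 1) (at u)"
    by (rule DERIV_chain2[OF DERIV_ln_add_exp_exp[OF assms]]) (auto intro!: derivative_eq_intros)
  with DERIV_ln_exp_exp_minus_one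
  have "((\<lambda>u. (2 * t + ln lam) + (ln (exp (exp u) - 1) - exp u)
      - ln (lam + exp (exp (t + u)))) has_real_derivative
        0 + exp u / (exp (exp u) - 1)
        - exp (t + u) * (exp (exp (t + u)) / (lam + exp (exp (t + u)))) * 1) (at u)"
    by (intro DERIV_diff DERIV_add DERIV_const)
  then show ?thesis
    unfolding Hlift_def[abs_def] by simp
qed

lemma Hlift_critical_point:
  assumes lam: "lam > 0"
  obtains u where "Hlift lam t u = Hfun lam t" "(Hlift lam t has_real_derivative 0) (at u)"
proof
  define d where "d = exp t"
  define x where "x = xtilde lam d"
  have d: "d > 0" by (simp add: d_def)
  from xtilde_pos_eq[OF _ d] lam have x: "x > 0" and eq: "d * x = 1 + lam / (1 + x) powr d"
    by (auto simp: x_def)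
  define L where "L = ln (1 + x)"
  define P where "P = (1 + x) powr d"
  have L: "L > 0" using x by (simp add: L_def)
  have P: "P > 0" "ln P = d * L" using x by (simp_all add: P_def L_def ln_powr)
  define u where "u = ln L"
  have exp_u: "exp u = L" "exp (exp u) = 1 + x"
    using L x by (simp_all add: u_def L_def)
  have exp_tu: "exp (t + u) = d * L" "exp (d * L) = P"
    using x by (simp_all add: exp_add exp_u d_def L_def P_def powr_def mult.commute)
  have eq': "d * x - 1 = lam / P" using eq by (simp add: P_def)
  then have lam_P: "lam + P = P * d * x" using P by (simp add: field_simps)
  have "Hfun lam t = ln (exp t * ((d * x - 1) / (1 + x)))"
    by (simp add: Hfun_def nu_def d_def x_def)
  also have "\<dots> = t + ln lam - d * L - L"
    unfolding eq' using lam P x by (simp add: ln_mult ln_div L_def)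
  also have "\<dots> = Hlift lam t u"
    unfolding Hlift_def exp_u exp_tu lam_P using P d x
    by (simp add: ln_mult L_def d_def)
  finally show "Hlift lam t u = Hfun lam t" ..
  have "exp (t + u) * (exp (exp (t + u)) / (lam + exp (exp (t + u)))) = L / x"
    unfolding exp_tu lam_P using P d x by (simp add: field_simps)
  then show "(Hlift lam t has_real_derivative 0) (at u)"
    using DERIV_Hlift[of lam t u] lam x by (simp add: exp_u L_def)
qed

lemma Hlift_le_Hfun:
  assumes lam: "lam > 0"
  shows "Hlift lam t u \<le> Hfun lam t"
proof -
  obtain u0 where u0: "Hlift lam t u0 = Hfun lam t" "(Hlift lam t has_real_derivative 0) (at u0)"
    using Hlift_critical_point[OF lam] .
  have "concave_on UNIV (\<lambda>u. Hlift lam t u)"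
    using concave_on_compose_affine[OF _ concave_on_Hlift,
        where g = "\<lambda>u. (0, u)" and c = "(t, 0)"] lam
    by (simp add: linear_iff)
  then have convex: "convex_on UNIV (\<lambda>u. - Hlift lam t u)"
    by (simp add: concave_on_def)
  have "((\<lambda>u. - Hlift lam t u) has_real_derivative 0) (at u0)"
    using DERIV_minus[OF u0(2)] by simp
  from convex_on_imp_above_tangent[OF convex _ _ _ this]
  have "0 * (u - u0) \<le> - Hlift lam t u - - Hlift lam t u0"
    by simp
  with u0(1) show ?thesis by simp
qed

lemma concave_on_Hfun:
  assumes "lam > 0"
  shows "concave_on UNIV (Hfun lam)"
  using assms
  by (intro concave_on_partial_max[OF concave_on_Hlift[of lam]] Hlift_le_Hfun)
     (auto elim: Hlift_critical_point)

theorem lemma5p2: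
  fixes lam :: real
  assumes "lam > 0"
  shows "concave_on {0..} (Hfun lam)"
  using concave_on_Hfun[OF assms] by (simp add: concave_on_def convex_on_subset)

end
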